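(* Let $d$ be a positive integer and let $H$ be a bipartite graph in which all vertices in one part have degree at most $d$. Let $c>0$. Then there exists $C=C(c,H)>0$ such that for every $t$ and every $(c,t)$-sparse graph $\Gamma$ with $n$ vertices, any subgraph $G\subseteq\Gamma$ with at least $C t^{1/d} n^{2-1/d}$ edges contains a copy of $H$ which is an induced subgraph of $\Gamma$.
   Context: A graph $\Gamma$ is $(c,t)$-sparse if for every pair of (not necessarily disjoint) vertex subsets $A,B\subseteq V(\Gamma)$ with $|A|,|B|\ge t$ we have $e(A,B)\le (1-c)|A||B|$, where $e(A,B)$ is the number of ordered pairs $(a,b)\in A\times B$ such that $\{a,b\}$ is an edge of $\Gamma$. A copy of $H$ in $G$ is induced in $\Gamma$ if the vertex set of the copy induces in $\Gamma$ exactly the edges of the copy. *)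

theory Defs
  imports Complex_Main
begin

definition simple_graph :: "'a set \<Rightarrow> ('a \<Rightarrow> 'a \<Rightarrow> bool) \<Rightarrow> bool" where
  "simple_graph V E \<longleftrightarrow> finite V \<and> (\<forall>u v. E u v \<longrightarrow> u \<in> V \<and> v \<in> V)
     \<and> (\<forall>u v. E u v \<longrightarrow> E v u) \<and> (\<forall>u. \<not> E u u)"

definition subgraph :: "'a set \<Rightarrow> ('a \<Rightarrow> 'a \<Rightarrow> bool) \<Rightarrow> 'a set \<Rightarrow> ('a \<Rightarrow> 'a \<Rightarrow> bool) \<Rightarrow> bool" where
  "subgraph VG EG V E \<longleftrightarrow> simple_graph VG EG \<and> VG \<subseteq> V \<and> (\<forall>u v. EG u v \<longrightarrow> E u v)"

definition num_edges :: "'a set \<Rightarrow> ('a \<Rightarrow> 'a \<Rightarrow> bool) \<Rightarrow> nat" where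
  "num_edges V E = card {{u, v} | u v. u \<in> V \<and> v \<in> V \<and> E u v}"

definition e_pairs :: "('a \<Rightarrow> 'a \<Rightarrow> bool) \<Rightarrow> 'a set \<Rightarrow> 'a set \<Rightarrow> nat" where
  "e_pairs E A B = card {(a, b). a \<in> A \<and> b \<in> B \<and> E a b}"

definition sparse :: "real \<Rightarrow> real \<Rightarrow> 'a set \<Rightarrow> ('a \<Rightarrow> 'a \<Rightarrow> bool) \<Rightarrow> bool" where
  "sparse c t V E \<longleftrightarrow> (\<forall>A B. A \<subseteq> V \<longrightarrow> B \<subseteq> V \<longrightarrow> real (card A) \<ge> t \<longrightarrow> real (card B) \<ge> t
       \<longrightarrow> real (e_pairs E A B) \<le> (1 - c) * real (card A) * real (card B))"

definition degree :: "'a set \<Rightarrow> ('a \<Rightarrow> 'a \<Rightarrow> bool) \<Rightarrow> 'a \<Rightarrow> nat" where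
  "degree V E x = card {y \<in> V. E x y}"

definition bipartite_one_side_deg :: "'b set \<Rightarrow> ('b \<Rightarrow> 'b \<Rightarrow> bool) \<Rightarrow> nat \<Rightarrow> bool" where
  "bipartite_one_side_deg VH EH d \<longleftrightarrow> (\<exists>X Y. X \<union> Y = VH \<and> X \<inter> Y = {}
      \<and> (\<forall>u v. EH u v \<longrightarrow> (u \<in> X \<and> v \<in> Y) \<or> (u \<in> Y \<and> v \<in> X))
      \<and> (\<forall>x\<in>X. degree VH EH x \<le> d))"

definition induced_copy :: "'b set \<Rightarrow> ('b \<Rightarrow> 'b \<Rightarrow> bool) \<Rightarrow> 'a set \<Rightarrow> ('a \<Rightarrow> 'a \<Rightarrow> bool)
    \<Rightarrow> ('a \<Rightarrow> 'a \<Rightarrow> bool) \<Rightarrow> ('b \<Rightarrow> 'a) \<Rightarrow> bool" where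
  "induced_copy VH EH VG EG E phi \<longleftrightarrow> inj_on phi VH \<and> phi ` VH \<subseteq> VG
     \<and> (\<forall>x\<in>VH. \<forall>y\<in>VH. EH x y \<longrightarrow> EG (phi x) (phi y))
     \<and> (\<forall>x\<in>VH. \<forall>y\<in>VH. E (phi x) (phi y) \<longrightarrow> EH x y)"

end

theory Submission
  imports Defs "HOL-Library.FuncSet" "HOL-Analysis.Convex"
begin

text \<open>Averaging over all \<open>d\<close>-tuples \<open>T\<close> of vertices of \<open>G\<close> (dependent random choice), the edge
  bound yields a tuple whose common neighbourhood \<open>U\<close> has order well above \<open>t\<close>, while for every
  \<open>x \<in> X\<close> only a small fraction of the maps \<open>N\<^sub>H(x) \<rightarrow> U\<close> have a common neighbourhood of order
  less than \<open>K t\<close>. Sparseness of \<open>\<Gamma>\<close> means that fewer than \<open>t\<close> vertices see more than a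
  \<open>(1 - c)\<close>-fraction of any set of at least \<open>t\<close> vertices, so deleting the closed neighbourhood of any
  other vertex keeps a \<open>c\<close>-fraction of the set. Iterating this, \<open>U\<close> carries many injective
  \<open>\<Gamma>\<close>-independent maps \<open>f : Y \<rightarrow> U\<close>, and few of them leave some \<open>x\<close> with fewer than \<open>M t\<close>
  candidate images (common \<open>G\<close>-neighbours of \<open>f(N\<^sub>H(x))\<close> that avoid the closed
  \<open>\<Gamma>\<close>-neighbourhoods of the rest of \<open>f(Y)\<close>). A greedy \<open>\<Gamma>\<close>-independent transversal of the
  candidate sets of a good \<open>f\<close> completes an induced copy of \<open>H\<close>.\<close>

lemma card_mult_power_mean_le:
  fixes f :: "'i \<Rightarrow> real"
  assumes "finite A" "A \<noteq> {}" "\<And>i. i \<in> A \<Longrightarrow> f i \<ge> 0"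
  shows "real (card A) * ((\<Sum>i\<in>A. f i) / card A) ^ k \<le> (\<Sum>i\<in>A. f i ^ k)"
proof -
  have convex: "convex_on {0..} (\<lambda>x::real. x ^ k)"
    by (cases "even k") (auto intro: convex_on_subset convex_power_even convex_power_odd)
  have n: "real (card A) > 0" using assms by auto
  have "(\<Sum>i\<in>A. (1 / card A) *\<^sub>R f i) ^ k \<le> (\<Sum>i\<in>A. (1 / card A) * f i ^ k)"
    by (rule convex_on_sum[OF assms(1,2) convex]) (use assms n in auto)
  then have "((\<Sum>i\<in>A. f i) / card A) ^ k \<le> (\<Sum>i\<in>A. f i ^ k) / card A"
    by (simp add: sum_distrib_left[symmetric] sum_divide_distrib[symmetric])
  then show ?thesis using n by (simp add: field_simps)
qed

lemma sum_card_filter_swap: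
  assumes "finite A" "finite B"
  shows "(\<Sum>a\<in>A. card {b\<in>B. R a b}) = (\<Sum>b\<in>B. card {a\<in>A. R a b})"
proof -
  have "(\<Sum>a\<in>A. card {b\<in>B. R a b}) = (\<Sum>a\<in>A. \<Sum>b\<in>B. if R a b then 1 else 0)"
    using assms by (simp add: sum.inter_filter[symmetric])
  also have "\<dots> = (\<Sum>b\<in>B. \<Sum>a\<in>A. if R a b then 1 else 0)" by (rule sum.swap)
  also have "\<dots> = (\<Sum>b\<in>B. card {a\<in>A. R a b})"
    using assms by (simp add: sum.inter_filter[symmetric])
  finally show ?thesis .
qed

lemma card_PiE_filter_split_le:
  assumes "finite Y" "S \<subseteq> Y" "finite U"
    and "\<And>f. f \<in> Y \<rightarrow>\<^sub>E U \<Longrightarrow> P f \<Longrightarrow> Q (restrict f S) (restrict f (Y - S))"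
  shows "card {f \<in> Y \<rightarrow>\<^sub>E U. P f} \<le> (\<Sum>h\<in>S \<rightarrow>\<^sub>E U. card {g \<in> (Y - S) \<rightarrow>\<^sub>E U. Q h g})"
proof -
  let ?split = "\<lambda>f. (restrict f S, restrict f (Y - S))"
  let ?pairs = "Sigma (S \<rightarrow>\<^sub>E U) (\<lambda>h. {g \<in> (Y - S) \<rightarrow>\<^sub>E U. Q h g})"
  have fin: "finite (S \<rightarrow>\<^sub>E U)" "finite ((Y - S) \<rightarrow>\<^sub>E U)"
    using assms(1-3) finite_subset by (auto intro!: finite_PiE)
  have "inj_on ?split {f \<in> Y \<rightarrow>\<^sub>E U. P f}"
  proof (rule inj_onI)
    fix f f' assume f: "f \<in> {f \<in> Y \<rightarrow>\<^sub>E U. P f}" and f': "f' \<in> {f \<in> Y \<rightarrow>\<^sub>E U. P f}"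
      and eq: "?split f = ?split f'"
    have "f z = f' z" if "z \<in> Y" for z
      using eq assms(2) that by (cases "z \<in> S") (auto simp: fun_eq_iff split: if_splits)
    then show "f = f'" using f f' by (auto intro: PiE_ext)
  qed
  moreover have "?split ` {f \<in> Y \<rightarrow>\<^sub>E U. P f} \<subseteq> ?pairs"
    using assms(2,4) by (auto simp: PiE_iff)
  moreover have "finite ?pairs" using fin by auto
  ultimately have "card {f \<in> Y \<rightarrow>\<^sub>E U. P f} \<le> card ?pairs" by (rule card_inj_on_le)
  also have "\<dots> = (\<Sum>h\<in>S \<rightarrow>\<^sub>E U. card {g \<in> (Y - S) \<rightarrow>\<^sub>E U. Q h g})"
    using fin by (simp add: card_SigmaI)
  finally show ?thesis .
qed

lemma weighted_sum_less_power_imp_bounds: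
  fixes a :: "'x \<Rightarrow> real" and k :: "'x \<Rightarrow> nat"
  assumes "finite X" "\<And>x. x \<in> X \<Longrightarrow> 0 \<le> a x \<and> k x \<le> d" "0 < \<epsilon>" "0 \<le> l" "0 \<le> N" "N \<le> n" "0 < n"
    and less: "l ^ d + (\<Sum>x\<in>X. a x * n ^ (d - k x)) / \<epsilon> < N ^ d"
  shows "l < N" and "\<And>x. x \<in> X \<Longrightarrow> a x < \<epsilon> * N ^ k x"
proof -
  have terms: "0 \<le> a x * n ^ (d - k x)" if "x \<in> X" for x using assms(2,7) that by simp
  then have "l ^ d < N ^ d" using less assms(3) by (smt (verit) divide_nonneg_pos sum_nonneg)
  then show "l < N" using assms(5) by (rule power_less_imp_less_base)
  fix x assume x: "x \<in> X"
  have "a x * n ^ (d - k x) \<le> (\<Sum>x\<in>X. a x * n ^ (d - k x))"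
    using assms(1) x terms by (intro member_le_sum) auto
  also have "\<dots> < \<epsilon> * N ^ d"
  proof -
    have "0 \<le> \<epsilon> * l ^ d" using assms(3,4) by simp
    then show ?thesis using less assms(3) by (simp add: field_simps)
  qed
  also have "\<dots> = \<epsilon> * (N ^ k x * N ^ (d - k x))" using assms(2)[OF x] by (simp flip: power_add)
  also have "\<dots> \<le> \<epsilon> * N ^ k x * n ^ (d - k x)"
    using assms(3,5,6) by (simp add: mult_left_mono power_mono mult.assoc)
  finally show "a x < \<epsilon> * N ^ k x" using assms(7) by simp
qed

lemma mult_power_less_power_power:
  fixes s t :: real
  assumes "0 \<le> s" "1 \<le> t" "0 < d"
  shows "s * t ^ d < ((s + 1) ^ d * t) ^ d"
proof -
  have "s * t ^ d < (s + 1) * t ^ d" using assms(2) by simp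
  also have "\<dots> \<le> (s + 1) ^ (d * d) * t ^ d"
    using power_increasing[of 1 "d * d" "s + 1"] assms by (intro mult_right_mono) auto
  also have "\<dots> = ((s + 1) ^ d * t) ^ d" by (simp add: power_mult power_mult_distrib)
  finally show ?thesis .
qed

section \<open>Neighbourhoods and independent maps\<close>

definition closed_nbhd :: "('a \<Rightarrow> 'a \<Rightarrow> bool) \<Rightarrow> 'a \<Rightarrow> 'a set" where
  "closed_nbhd E v = insert v {w. E v w}"

definition common_nbhd :: "'a set \<Rightarrow> ('a \<Rightarrow> 'a \<Rightarrow> bool) \<Rightarrow> 'a set \<Rightarrow> 'a set" where
  "common_nbhd V E A = {v \<in> V. \<forall>a\<in>A. E a v}"

definition heavy_vertices :: "'a set \<Rightarrow> ('a \<Rightarrow> 'a \<Rightarrow> bool) \<Rightarrow> real \<Rightarrow> 'a set \<Rightarrow> 'a set" where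
  "heavy_vertices V E c W = {v \<in> V. real (card {w \<in> W. E v w}) > (1 - c) * real (card W)}"

definition indep_embeddings :: "'b set \<Rightarrow> 'a set \<Rightarrow> ('a \<Rightarrow> 'a \<Rightarrow> bool) \<Rightarrow> ('b \<Rightarrow> 'a) set" where
  "indep_embeddings Y W E = {f \<in> Y \<rightarrow>\<^sub>E W. inj_on f Y \<and> (\<forall>y\<in>Y. \<forall>y'\<in>Y. \<not> E (f y) (f y'))}"

definition nearly_dominating :: "'z set \<Rightarrow> 'a set \<Rightarrow> 'a set \<Rightarrow> ('a \<Rightarrow> 'a \<Rightarrow> bool) \<Rightarrow> real \<Rightarrow> ('z \<Rightarrow> 'a) set" where
  "nearly_dominating Z U W E r = {g \<in> Z \<rightarrow>\<^sub>E U. real (card (W - (\<Union>z\<in>Z. closed_nbhd E (g z)))) < r}"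

text \<open>The admissible images of a vertex \<open>x\<close> of \<open>H\<close> with \<open>N\<^sub>H(x) = S\<close>, once \<open>Y\<close> is embedded by \<open>f\<close>.\<close>
definition extension_candidates ::
    "'a set \<Rightarrow> ('a \<Rightarrow> 'a \<Rightarrow> bool) \<Rightarrow> ('a \<Rightarrow> 'a \<Rightarrow> bool) \<Rightarrow> ('b \<Rightarrow> 'a) \<Rightarrow> 'b set \<Rightarrow> 'b set \<Rightarrow> 'a set" where
  "extension_candidates VG EG E f Y S = common_nbhd VG EG (f ` S) - (\<Union>z\<in>Y - S. closed_nbhd E (f z))"

lemma num_edges_pos_imp_edge:
  assumes "0 < num_edges V E"
  obtains u v where "u \<in> V" "v \<in> V" "E u v"
proof -
  have "{{u, v} | u v. u \<in> V \<and> v \<in> V \<and> E u v} \<noteq> {}"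
    using assms unfolding num_edges_def by (metis card.empty less_irrefl)
  then show thesis using that by blast
qed

lemma sparse_edge_imp_gt_1:
  assumes "sparse c t V E" "c > 0" "u \<in> V" "v \<in> V" "E u v"
  shows "t > 1"
proof (rule ccontr)
  assume "\<not> t > 1"
  then have "t \<le> real (card {u})" "t \<le> real (card {v})" by auto
  then have "real (e_pairs E {u} {v}) \<le> (1 - c) * real (card {u}) * real (card {v})"
    using assms(1,3,4) unfolding sparse_def by blast
  moreover have "{(a, b). a \<in> {u} \<and> b \<in> {v} \<and> E a b} = {(u, v)}" using assms(5) by auto
  ultimately show False using assms(2) unfolding e_pairs_def by simp
qed

lemma card_diff_closed_nbhd_ge:
  assumes "finite W" "v \<in> V" "v \<notin> heavy_vertices V E c W"
  shows "c * real (card W) - 1 \<le> real (card (W - closed_nbhd E v))"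
proof -
  have "W \<subseteq> insert v ((W - closed_nbhd E v) \<union> {w \<in> W. E v w})"
    unfolding closed_nbhd_def by auto
  then have "card W \<le> card (insert v ((W - closed_nbhd E v) \<union> {w \<in> W. E v w}))"
    using assms(1) by (intro card_mono) auto
  also have "\<dots> \<le> card ((W - closed_nbhd E v) \<union> {w \<in> W. E v w}) + 1"
    using assms(1) by (simp add: card_insert_if)
  also have "\<dots> \<le> card (W - closed_nbhd E v) + card {w \<in> W. E v w} + 1"
    using card_Un_le by simp
  finally show ?thesis
    using assms(2,3) unfolding heavy_vertices_def by (simp add: algebra_simps)
qed

lemma finite_indep_embeddings: "finite Y \<Longrightarrow> finite W \<Longrightarrow> finite (indep_embeddings Y W E)"
  unfolding indep_embeddings_def by (rule finite_subset[of _ "Y \<rightarrow>\<^sub>E W"]) (auto intro!: finite_PiE)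

lemma fun_upd_in_indep_embeddings:
  assumes "y \<notin> Y" "v \<in> W" "g \<in> indep_embeddings Y (W - closed_nbhd E v) E"
    and "\<And>u w. E u w \<Longrightarrow> E w u" "\<not> E v v"
  shows "g(y := v) \<in> indep_embeddings (insert y Y) W E"
proof -
  have g: "g \<in> Y \<rightarrow>\<^sub>E W - closed_nbhd E v" "inj_on g Y" "\<forall>a\<in>Y. \<forall>b\<in>Y. \<not> E (g a) (g b)"
    using assms(3) unfolding indep_embeddings_def by auto
  then have "\<forall>a\<in>Y. g a \<in> W \<and> g a \<noteq> v \<and> \<not> E v (g a) \<and> \<not> E (g a) v"
    using assms(4) unfolding closed_nbhd_def by blast
  moreover have "g(y := v) \<in> insert y Y \<rightarrow>\<^sub>E W"
    using g(1) assms(2) by (intro PiE_fun_upd) (auto simp: PiE_iff)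
  ultimately show ?thesis
    using g(2,3) assms(1,5) unfolding indep_embeddings_def by (auto simp: inj_on_def)
qed

lemma sum_card_indep_embeddings_le:
  assumes "y \<notin> Y" "finite Y" "finite W" "A \<subseteq> W" "\<And>u v. E u v \<Longrightarrow> E v u" "\<And>u. \<not> E u u"
  shows "(\<Sum>v\<in>A. card (indep_embeddings Y (W - closed_nbhd E v) E)) \<le> card (indep_embeddings (insert y Y) W E)"
proof -
  let ?S = "Sigma A (\<lambda>v. indep_embeddings Y (W - closed_nbhd E v) E)"
  let ?ext = "\<lambda>(v, g). g(y := v)"
  have "?S \<subseteq> W \<times> (Y \<rightarrow>\<^sub>E W)" using assms(4) by (auto simp: indep_embeddings_def PiE_iff extensional_def)
  then have "inj_on ?ext ?S" by (rule inj_on_subset[OF inj_combinator[OF assms(1)]])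
  moreover have "?ext ` ?S \<subseteq> indep_embeddings (insert y Y) W E"
    using fun_upd_in_indep_embeddings[where E = E, OF assms(1) _ _ assms(5,6)] assms(4) by auto
  moreover have "finite (indep_embeddings (insert y Y) W E)" using assms(2,3) by (simp add: finite_indep_embeddings)
  ultimately have "card ?S \<le> card (indep_embeddings (insert y Y) W E)" by (rule card_inj_on_le)
  moreover have "card ?S = (\<Sum>v\<in>A. card (indep_embeddings Y (W - closed_nbhd E v) E))"
    using assms(2-4) finite_subset by (auto intro!: card_SigmaI finite_indep_embeddings)
  ultimately show ?thesis by simp
qed

lemma finite_nearly_dominating: "finite Z \<Longrightarrow> finite U \<Longrightarrow> finite (nearly_dominating Z U W E r)"
  unfolding nearly_dominating_def by (rule finite_subset[of _ "Z \<rightarrow>\<^sub>E U"]) (auto intro!: finite_PiE)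

lemma card_nearly_dominating_insert_le:
  assumes "y \<notin> Z" "finite Z" "finite U"
  shows "card (nearly_dominating (insert y Z) U W E r)
    \<le> card (U \<inter> B) * card U ^ card Z + (\<Sum>v\<in>U - B. card (nearly_dominating Z U (W - closed_nbhd E v) E r))"
proof -
  define F where "F v = (if v \<in> B then Z \<rightarrow>\<^sub>E U else nearly_dominating Z U (W - closed_nbhd E v) E r)" for v
  have fin_F: "finite (F v)" for v
    using assms(2,3) by (simp add: F_def finite_nearly_dominating finite_PiE)
  have "nearly_dominating (insert y Z) U W E r \<subseteq> (\<lambda>(v, g). g(y := v)) ` Sigma U F"
  proof
    fix g assume g: "g \<in> nearly_dominating (insert y Z) U W E r"
    define g' where "g' = g(y := undefined)"
    have g_PiE: "g \<in> insert y Z \<rightarrow>\<^sub>E U" using g by (simp add: nearly_dominating_def)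
    then have "g' \<in> Z \<rightarrow>\<^sub>E U" unfolding g'_def using assms(1) by (rule fun_upd_in_PiE[rotated])
    moreover have "W - (\<Union>z\<in>insert y Z. closed_nbhd E (g z))
        = (W - closed_nbhd E (g y)) - (\<Union>z\<in>Z. closed_nbhd E (g' z))"
      using assms(1) by (auto simp: g'_def split: if_splits)
    ultimately have "g' \<in> F (g y)"
      using g by (auto simp: F_def nearly_dominating_def)
    moreover have "g = g'(y := g y)" by (simp add: g'_def)
    ultimately show "g \<in> (\<lambda>(v, g). g(y := v)) ` Sigma U F"
      using PiE_mem[OF g_PiE] by (auto intro!: image_eqI[of _ _ "(g y, g')"])
  qed
  then have "card (nearly_dominating (insert y Z) U W E r) \<le> card ((\<lambda>(v, g). g(y := v)) ` Sigma U F)"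
    using assms(3) fin_F by (intro card_mono) auto
  also have "\<dots> \<le> card (Sigma U F)" using assms(3) fin_F by (intro card_image_le) auto
  also have "\<dots> = (\<Sum>v\<in>U. card (F v))" using assms(3) fin_F by simp
  also have "\<dots> = card (U \<inter> B) * card U ^ card Z + (\<Sum>v\<in>U - B. card (nearly_dominating Z U (W - closed_nbhd E v) E r))"
    using assms(2,3) by (simp add: F_def if_distrib[of card] sum.If_cases card_funcsetE flip: Diff_eq)
  finally show ?thesis .
qed

lemma card_maps_with_few_candidates_le_sum:
  assumes "finite Y" "S \<subseteq> Y" "finite U"
  shows "card {f \<in> Y \<rightarrow>\<^sub>E U. real (card (extension_candidates VG EG E f Y S)) < r}
    \<le> (\<Sum>h\<in>S \<rightarrow>\<^sub>E U. if real (card (common_nbhd VG EG (h ` S))) < s then card U ^ card (Y - S)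
          else card (nearly_dominating (Y - S) U (common_nbhd VG EG (h ` S)) E r))"
proof -
  define Q where "Q h g \<longleftrightarrow> (if real (card (common_nbhd VG EG (h ` S))) < s then True
    else g \<in> nearly_dominating (Y - S) U (common_nbhd VG EG (h ` S)) E r)" for h g
  have "card {f \<in> Y \<rightarrow>\<^sub>E U. real (card (extension_candidates VG EG E f Y S)) < r}
      \<le> (\<Sum>h\<in>S \<rightarrow>\<^sub>E U. card {g \<in> (Y - S) \<rightarrow>\<^sub>E U. Q h g})"
  proof (rule card_PiE_filter_split_le[OF assms])
    fix f assume "f \<in> Y \<rightarrow>\<^sub>E U" "real (card (extension_candidates VG EG E f Y S)) < r"
    then show "Q (restrict f S) (restrict f (Y - S))"
      by (auto simp: Q_def nearly_dominating_def extension_candidates_def PiE_iff)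
  qed
  also have "\<dots> = (\<Sum>h\<in>S \<rightarrow>\<^sub>E U. if real (card (common_nbhd VG EG (h ` S))) < s then card U ^ card (Y - S)
          else card (nearly_dominating (Y - S) U (common_nbhd VG EG (h ` S)) E r))"
    using assms(1) by (intro sum.cong) (auto simp: Q_def nearly_dominating_def card_funcsetE)
  finally show ?thesis .
qed

section \<open>Dependent random choice\<close>

lemma sum_card_PiE_common_nbhd:
  assumes "finite V" "finite I" "finite S" "\<And>u v. E u v \<Longrightarrow> E v u"
  shows "(\<Sum>T\<in>I \<rightarrow>\<^sub>E V. card {g \<in> S \<rightarrow>\<^sub>E common_nbhd V E (T ` I). P g})
       = (\<Sum>g\<in>{g \<in> S \<rightarrow>\<^sub>E V. P g}. card (common_nbhd V E (g ` S)) ^ card I)"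
proof -
  let ?G = "{g \<in> S \<rightarrow>\<^sub>E V. P g}"
  let ?adj = "\<lambda>T g. \<forall>i\<in>I. \<forall>j\<in>S. E (T i) (g j)"
  have "finite ?G" using assms(1,3) by (simp add: finite_PiE)
  have "{g \<in> S \<rightarrow>\<^sub>E common_nbhd V E (T ` I). P g} = {g \<in> ?G. ?adj T g}" if "T \<in> I \<rightarrow>\<^sub>E V" for T
    using that by (auto simp: common_nbhd_def PiE_iff)
  then have "(\<Sum>T\<in>I \<rightarrow>\<^sub>E V. card {g \<in> S \<rightarrow>\<^sub>E common_nbhd V E (T ` I). P g})
      = (\<Sum>T\<in>I \<rightarrow>\<^sub>E V. card {g \<in> ?G. ?adj T g})"
    by (intro sum.cong) auto
  also have "\<dots> = (\<Sum>g\<in>?G. card {T \<in> I \<rightarrow>\<^sub>E V. ?adj T g})"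
    using assms(1,2) \<open>finite ?G\<close> by (intro sum_card_filter_swap[of _ _ ?adj]) (auto intro: finite_PiE)
  also have "\<dots> = (\<Sum>g\<in>?G. card (I \<rightarrow>\<^sub>E common_nbhd V E (g ` S)))"
  proof -
    have "{T \<in> I \<rightarrow>\<^sub>E V. ?adj T g} = I \<rightarrow>\<^sub>E common_nbhd V E (g ` S)" for g
      using assms(4) by (auto simp: common_nbhd_def PiE_iff extensional_def)
    then show ?thesis by simp
  qed
  finally show ?thesis using assms(2) by (simp add: card_funcsetE)
qed

lemma sum_card_common_nbhd_eq_sum_degree_power:
  assumes "finite V" "finite I" "\<And>u v. E u v \<Longrightarrow> E v u"
  shows "(\<Sum>T\<in>I \<rightarrow>\<^sub>E V. card (common_nbhd V E (T ` I))) = (\<Sum>v\<in>V. card (common_nbhd V E {v}) ^ card I)"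
proof -
  have "(\<Sum>T\<in>I \<rightarrow>\<^sub>E V. card (common_nbhd V E (T ` I))) = (\<Sum>T\<in>I \<rightarrow>\<^sub>E V. card {v \<in> V. \<forall>i\<in>I. E (T i) v})"
    by (simp add: common_nbhd_def)
  also have "\<dots> = (\<Sum>v\<in>V. card {T \<in> I \<rightarrow>\<^sub>E V. \<forall>i\<in>I. E (T i) v})"
    using assms(1,2) by (intro sum_card_filter_swap[of _ _ "\<lambda>T v. \<forall>i\<in>I. E (T i) v"]) (auto intro: finite_PiE)
  also have "\<dots> = (\<Sum>v\<in>V. card (I \<rightarrow>\<^sub>E common_nbhd V E {v}))"
  proof -
    have "{T \<in> I \<rightarrow>\<^sub>E V. \<forall>i\<in>I. E (T i) v} = I \<rightarrow>\<^sub>E common_nbhd V E {v}" for v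
      using assms(3) by (auto simp: common_nbhd_def PiE_iff extensional_def)
    then show ?thesis by simp
  qed
  finally show ?thesis using assms(2) by (simp add: card_funcsetE)
qed

lemma num_edges_le_sum_degree:
  assumes "finite V"
  shows "num_edges V E \<le> (\<Sum>v\<in>V. card (common_nbhd V E {v}))"
proof -
  have "{{u, v} | u v. u \<in> V \<and> v \<in> V \<and> E u v} = (\<lambda>(u, v). {u, v}) ` Sigma V (\<lambda>u. common_nbhd V E {u})"
    by (auto simp: common_nbhd_def)
  moreover have "finite (Sigma V (\<lambda>u. common_nbhd V E {u}))"
    using assms by (simp add: common_nbhd_def)
  ultimately have "num_edges V E \<le> card (Sigma V (\<lambda>u. common_nbhd V E {u}))"
    unfolding num_edges_def by (simp add: card_image_le)
  also have "\<dots> = (\<Sum>v\<in>V. card (common_nbhd V E {v}))"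
    using assms by (intro card_SigmaI) (auto simp: common_nbhd_def)
  finally show ?thesis .
qed

lemma sum_card_common_nbhd_ge:
  assumes "finite V" "V \<noteq> {}" "finite I" "\<And>u v. E u v \<Longrightarrow> E v u"
  shows "real (card V) * (real (num_edges V E) / card V) ^ card I
           \<le> (\<Sum>T\<in>I \<rightarrow>\<^sub>E V. real (card (common_nbhd V E (T ` I))))"
proof -
  have "real (num_edges V E) \<le> (\<Sum>v\<in>V. real (card (common_nbhd V E {v})))"
    using num_edges_le_sum_degree[OF assms(1)] by (metis of_nat_le_iff of_nat_sum)
  then have "real (card V) * (real (num_edges V E) / card V) ^ card I
      \<le> real (card V) * ((\<Sum>v\<in>V. real (card (common_nbhd V E {v}))) / card V) ^ card I"
    by (intro mult_left_mono power_mono divide_right_mono) auto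
  also have "\<dots> \<le> (\<Sum>v\<in>V. real (card (common_nbhd V E {v})) ^ card I)"
    using assms(1,2) by (rule card_mult_power_mean_le) simp
  also have "\<dots> = (\<Sum>T\<in>I \<rightarrow>\<^sub>E V. real (card (common_nbhd V E (T ` I))))"
    using arg_cong[where f = real, OF sum_card_common_nbhd_eq_sum_degree_power[OF assms(1,3,4)]] by simp
  finally show ?thesis .
qed

lemma sum_card_maps_with_small_common_nbhd_le:
  assumes "finite V" "finite I" "finite S" "\<And>u v. E u v \<Longrightarrow> E v u" "r \<ge> 0"
  shows "(\<Sum>T\<in>I \<rightarrow>\<^sub>E V. real (card {h \<in> S \<rightarrow>\<^sub>E common_nbhd V E (T ` I). real (card (common_nbhd V E (h ` S))) < r}))
           \<le> real (card V) ^ card S * r ^ card I"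
proof -
  let ?poor = "{h \<in> S \<rightarrow>\<^sub>E V. real (card (common_nbhd V E (h ` S))) < r}"
  have "(\<Sum>T\<in>I \<rightarrow>\<^sub>E V. real (card {h \<in> S \<rightarrow>\<^sub>E common_nbhd V E (T ` I). real (card (common_nbhd V E (h ` S))) < r}))
      = (\<Sum>h\<in>?poor. real (card (common_nbhd V E (h ` S))) ^ card I)"
    using arg_cong[where f = real, OF sum_card_PiE_common_nbhd[OF assms(1-4)]] by simp
  also have "\<dots> \<le> (\<Sum>h\<in>?poor. r ^ card I)"
    by (intro sum_mono power_mono) auto
  also have "\<dots> \<le> real (card (S \<rightarrow>\<^sub>E V)) * r ^ card I"
    using assms(1,3,5) by (simp add: card_mono finite_PiE mult_right_mono)
  finally show ?thesis using assms(3) by (simp add: card_funcsetE)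
qed

lemma dependent_random_choice:
  fixes S :: "'x \<Rightarrow> 'y set"
  assumes "finite V" "V \<noteq> {}" "finite I" "\<And>u v. E u v \<Longrightarrow> E v u"
    and "finite X" "\<And>x. x \<in> X \<Longrightarrow> finite (S x) \<and> card (S x) \<le> card I"
    and "\<epsilon> > 0" "r \<ge> 0" "l \<ge> 0"
    and mean: "real (card X) / \<epsilon> * r ^ card I + l ^ card I
      < ((\<Sum>T\<in>I \<rightarrow>\<^sub>E V. real (card (common_nbhd V E (T ` I)))) / card V ^ card I) ^ card I"
  shows "\<exists>T\<in>I \<rightarrow>\<^sub>E V. l < card (common_nbhd V E (T ` I)) \<and>
    (\<forall>x\<in>X. real (card {h \<in> S x \<rightarrow>\<^sub>E common_nbhd V E (T ` I). real (card (common_nbhd V E (h ` S x))) < r})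
             < \<epsilon> * real (card (common_nbhd V E (T ` I))) ^ card (S x))"
proof -
  define d where "d = card I"
  define n where "n = real (card V)"
  define N where "N T = real (card (common_nbhd V E (T ` I)))" for T
  define poor where "poor x T = real (card {h \<in> S x \<rightarrow>\<^sub>E common_nbhd V E (T ` I).
    real (card (common_nbhd V E (h ` S x))) < r})" for x T
  \<comment> \<open>The weight \<open>n ^ (d - card (S x))\<close> puts the expected number of poor maps on the scale of \<open>N T ^ d\<close>.\<close>
  define excess where "excess T = l ^ d + (\<Sum>x\<in>X. poor x T * n ^ (d - card (S x))) / \<epsilon>" for T
  have n: "n > 0" using assms(1,2) by (simp add: n_def card_gt_0_iff)
  have fin: "finite (I \<rightarrow>\<^sub>E V)" and card: "real (card (I \<rightarrow>\<^sub>E V)) = n ^ d"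
    using assms(1,3) by (auto simp: n_def d_def card_funcsetE intro: finite_PiE)
  have "(\<Sum>T\<in>I \<rightarrow>\<^sub>E V. \<Sum>x\<in>X. poor x T * n ^ (d - card (S x)))
      = (\<Sum>x\<in>X. n ^ (d - card (S x)) * (\<Sum>T\<in>I \<rightarrow>\<^sub>E V. poor x T))"
    by (subst sum.swap) (simp add: sum_distrib_right mult.commute)
  then have "(\<Sum>T\<in>I \<rightarrow>\<^sub>E V. excess T)
      = n ^ d * l ^ d + (\<Sum>x\<in>X. n ^ (d - card (S x)) * (\<Sum>T\<in>I \<rightarrow>\<^sub>E V. poor x T)) / \<epsilon>"
    unfolding excess_def using card by (simp add: sum.distrib sum_divide_distrib[symmetric])
  also have "\<dots> \<le> n ^ d * l ^ d + (\<Sum>x\<in>X. n ^ d * r ^ d) / \<epsilon>"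
  proof -
    have "n ^ (d - card (S x)) * (\<Sum>T\<in>I \<rightarrow>\<^sub>E V. poor x T) \<le> n ^ (d - card (S x)) * (n ^ card (S x) * r ^ d)"
      if "x \<in> X" for x
      using sum_card_maps_with_small_common_nbhd_le[of V I "S x" E r] assms(1,3,4,6,8) that n
      unfolding poor_def n_def d_def by (intro mult_left_mono) auto
    also have "n ^ (d - card (S x)) * (n ^ card (S x) * r ^ d) = n ^ d * r ^ d" if "x \<in> X" for x
      using assms(6)[OF that] by (simp add: d_def power_add[symmetric])
    finally show ?thesis using assms(7) by (intro add_left_mono divide_right_mono sum_mono) auto
  qed
  also have "\<dots> = n ^ d * (real (card X) / \<epsilon> * r ^ d + l ^ d)" by (simp add: algebra_simps)
  also have "\<dots> < n ^ d * ((\<Sum>T\<in>I \<rightarrow>\<^sub>E V. N T) / n ^ d) ^ d"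
    using mean n unfolding N_def n_def d_def by simp
  also have "\<dots> \<le> (\<Sum>T\<in>I \<rightarrow>\<^sub>E V. N T ^ d)"
    using card_mult_power_mean_le[OF fin, of N d] card fin by (auto simp: N_def PiE_eq_empty_iff assms(2))
  finally obtain T where T: "T \<in> I \<rightarrow>\<^sub>E V" and "excess T < N T ^ d"
    by (meson not_le sum_mono)
  moreover have "0 \<le> N T" "N T \<le> n"
    unfolding N_def n_def using assms(1) by (auto simp: card_mono common_nbhd_def)
  ultimately have "l < N T" "\<And>x. x \<in> X \<Longrightarrow> poor x T < \<epsilon> * N T ^ card (S x)"
    using weighted_sum_less_power_imp_bounds[of X "\<lambda>x. poor x T" "\<lambda>x. card (S x)" d \<epsilon> l "N T" n] assms(5-7,9) n
    unfolding excess_def d_def by (auto simp: poor_def)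
  then show ?thesis using T unfolding N_def poor_def by blast
qed

lemma edge_density_power_ge:
  fixes C t n m e :: real and d :: nat
  assumes "d > 0" "C \<ge> 0" "t > 0" "0 < m" "m \<le> n"
    and e: "C * t powr (1 / d) * n powr (2 - 1 / d) \<le> e"
  shows "C ^ d * t \<le> m * (e / m) ^ d / m ^ d"
proof -
  have "(t powr (1 / d)) ^ d = t powr (real d * (1 / d))"
    using assms(3) by (simp add: powr_power)
  then have "(t powr (1 / d)) ^ d = t" using assms(1,3) by simp
  moreover have "(n powr (2 - 1 / d)) ^ d = n ^ (2 * d - 1)"
  proof -
    have "real d * (2 - 1 / real d) = real (2 * d - 1)" using assms(1) by (simp add: of_nat_diff field_simps)
    moreover have "(n powr (2 - 1 / d)) ^ d = n powr (real d * (2 - 1 / d))"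
      using assms(4,5) by (simp add: powr_power)
    ultimately show ?thesis using assms(4,5) by (simp add: powr_realpow)
  qed
  ultimately have "C ^ d * t * n ^ (2 * d - 1) \<le> e ^ d"
    using power_mono[OF e, of d] assms(2,3) by (simp add: power_mult_distrib)
  moreover have "m ^ (2 * d - 1) \<le> n ^ (2 * d - 1)" using assms(4,5) by (simp add: power_mono)
  ultimately have "C ^ d * t * m ^ (2 * d - 1) \<le> e ^ d"
    using assms(2,3) by (smt (verit) mult_left_mono zero_le_power mult_nonneg_nonneg)
  then have "C ^ d * t \<le> e ^ d / m ^ (2 * d - 1)" using assms(4) by (simp add: pos_le_divide_eq)
  also have "\<dots> = m * (e / m) ^ d / m ^ d"
  proof -
    have "m ^ d * m ^ d = m * m ^ (2 * d - 1)"
      using assms(1) by (metis power_add power_Suc Suc_diff_1 mult_2 mult_pos_pos zero_less_numeral)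
    then show ?thesis using assms(4) by (simp add: power_divide field_simps)
  qed
  finally show ?thesis .
qed

lemma mean_card_common_nbhd_ge:
  assumes "simple_graph V E" "V \<noteq> {}" "real (card V) \<le> n" "finite I" "card I = d" "d > 0"
    and "C \<ge> 0" "t > 0" "C * t powr (1 / d) * n powr (2 - 1 / d) \<le> real (num_edges V E)"
  shows "C ^ d * t \<le> (\<Sum>T\<in>I \<rightarrow>\<^sub>E V. real (card (common_nbhd V E (T ` I)))) / real (card V) ^ d"
proof -
  have "finite V" "\<And>u v. E u v \<Longrightarrow> E v u" using assms(1) unfolding simple_graph_def by auto
  then have "real (card V) * (real (num_edges V E) / card V) ^ d
      \<le> (\<Sum>T\<in>I \<rightarrow>\<^sub>E V. real (card (common_nbhd V E (T ` I))))"
    using sum_card_common_nbhd_ge[of V I E] assms(2,4,5) by simp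
  moreover have "0 < real (card V)" using \<open>finite V\<close> assms(2) by (simp add: card_gt_0_iff)
  ultimately show ?thesis
    using edge_density_power_ge[OF assms(6,7,8) _ assms(3,9)] by (smt (verit) divide_right_mono zero_le_power)
qed

section \<open>Sparse graphs\<close>

text \<open>A set of at least \<open>shrink_threshold c K0 (Suc k) * t\<close> vertices keeps at least
  \<open>shrink_threshold c K0 k * t\<close> of them after removing the closed neighbourhood of a vertex that is
  not heavy for it; the last term of the maximum makes room for \<open>k + 1\<close> sets of fewer than \<open>t\<close> heavy
  vertices.\<close>
primrec shrink_threshold :: "real \<Rightarrow> real \<Rightarrow> nat \<Rightarrow> real" where
  "shrink_threshold c K0 0 = K0"
| "shrink_threshold c K0 (Suc k) =
     max (shrink_threshold c K0 k) (max ((shrink_threshold c K0 k + 1) / c) (real k + 1))"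

lemma shrink_threshold_Suc_ge:
  "shrink_threshold c K0 k \<le> shrink_threshold c K0 (Suc k)"
  "(shrink_threshold c K0 k + 1) / c \<le> shrink_threshold c K0 (Suc k)"
  "real k + 1 \<le> shrink_threshold c K0 (Suc k)"
  by simp_all

declare shrink_threshold.simps(2) [simp del]

lemma shrink_threshold_mono: "k \<le> l \<Longrightarrow> shrink_threshold c K0 k \<le> shrink_threshold c K0 l"
  by (induction l rule: dec_induct) (auto intro: order_trans shrink_threshold_Suc_ge(1))

lemma shrink_threshold_ge: "K0 \<le> shrink_threshold c K0 k"
  using shrink_threshold_mono[of 0 k] by simp

text \<open>In the greedy count of independent embeddings, at least half of a set of at least
  \<open>indep_threshold c (Suc m) * t\<close> vertices are not heavy, and each of them leaves at least
  \<open>c / 2\<close> times the set for the remaining \<open>m\<close> images.\<close>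
primrec indep_threshold :: "real \<Rightarrow> nat \<Rightarrow> real" where
  "indep_threshold c 0 = 0"
| "indep_threshold c (Suc m) = max (max 2 (2 / c)) (2 * indep_threshold c m / c)"

primrec indep_density :: "real \<Rightarrow> nat \<Rightarrow> real" where
  "indep_density c 0 = 1"
| "indep_density c (Suc m) = indep_density c m * (c / 2) ^ m / 2"

lemma indep_density_pos: "0 < c \<Longrightarrow> 0 < indep_density c m"
  by (induction m) auto

text \<open>The constant \<open>C\<close> of the theorem, built from the parameters of dependent random choice:
  the tolerated fraction \<open>\<epsilon>\<close> of poor maps, the threshold \<open>K\<close> below which a map is poor, and the
  factor \<open>L\<close> by which the common neighbourhood must exceed \<open>t\<close>.\<close>
definition copy_constant :: "real \<Rightarrow> nat \<Rightarrow> nat \<Rightarrow> nat \<Rightarrow> real" where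
  "copy_constant c a b d =
     (let \<epsilon> = indep_density c b / (2 * (real a + 1));
          K = shrink_threshold c (shrink_threshold c 0 a) b;
          L = max (indep_threshold c b) (max 1 (real b / \<epsilon>))
      in real a / \<epsilon> * K ^ d + L ^ d + 1)"

lemma copy_constant_ge_1: "0 < c \<Longrightarrow> 1 \<le> copy_constant c a b d"
  using indep_density_pos[of c b] shrink_threshold_ge[of 0 c a]
    shrink_threshold_ge[of "shrink_threshold c 0 a" c b]
  by (auto simp: copy_constant_def Let_def intro!: add_nonneg_nonneg mult_nonneg_nonneg)

locale sparse_graph =
  fixes V :: "'a set" and E :: "'a \<Rightarrow> 'a \<Rightarrow> bool" and c t :: real
  assumes simple: "simple_graph V E" and sparse: "sparse c t V E"
    and c_pos: "0 < c" and t_ge_1: "1 \<le> t"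
begin

lemma finite_V: "finite V" and E_sym: "E u v \<Longrightarrow> E v u" and E_irrefl: "\<not> E u u"
  using simple unfolding simple_graph_def by auto

lemma card_heavy_vertices_less:
  assumes "W \<subseteq> V" "t \<le> real (card W)"
  shows "real (card (heavy_vertices V E c W)) < t"
proof (rule ccontr)
  let ?B = "heavy_vertices V E c W"
  assume "\<not> ?thesis"
  then have "t \<le> real (card ?B)" by simp
  moreover have B: "?B \<subseteq> V" "finite ?B" "finite W"
    using assms(1) finite_V finite_subset unfolding heavy_vertices_def by auto
  ultimately have "real (e_pairs E ?B W) \<le> (1 - c) * real (card ?B) * real (card W)"
    using sparse assms unfolding sparse_def by blast
  moreover have "{(a, b). a \<in> ?B \<and> b \<in> W \<and> E a b} = Sigma ?B (\<lambda>v. {w \<in> W. E v w})" by auto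
  then have "real (e_pairs E ?B W) = (\<Sum>v\<in>?B. real (card {w \<in> W. E v w}))"
    unfolding e_pairs_def using B by simp
  moreover have "?B \<noteq> {}" using \<open>t \<le> real (card ?B)\<close> t_ge_1 by auto
  then have "(\<Sum>v\<in>?B. (1 - c) * real (card W)) < (\<Sum>v\<in>?B. real (card {w \<in> W. E v w}))"
    using B by (intro sum_strict_mono) (auto simp: heavy_vertices_def)
  ultimately show False by (simp add: mult_ac)
qed

lemma card_heavy_vertices_less_threshold:
  assumes "W \<subseteq> V" "shrink_threshold c K0 (Suc k) * t \<le> real (card W)"
  shows "real (card (heavy_vertices V E c W)) < t"
proof (rule card_heavy_vertices_less[OF assms(1)])
  have "1 * t \<le> shrink_threshold c K0 (Suc k) * t"
    using t_ge_1 shrink_threshold_Suc_ge(3)[of k c K0] by (intro mult_right_mono) auto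
  then show "t \<le> real (card W)" using assms(2) by simp
qed

lemma card_diff_closed_nbhd_threshold:
  assumes "W \<subseteq> V" "shrink_threshold c K0 (Suc k) * t \<le> real (card W)"
    and "v \<in> V" "v \<notin> heavy_vertices V E c W"
  shows "shrink_threshold c K0 k * t \<le> real (card (W - closed_nbhd E v))"
proof -
  let ?K = "shrink_threshold c K0 k"
  have "?K + 1 \<le> c * shrink_threshold c K0 (Suc k)"
    using shrink_threshold_Suc_ge(2)[of c K0 k] c_pos by (simp add: pos_divide_le_eq mult.commute)
  then have "(?K + 1) * t \<le> c * real (card W)"
    using assms(2) c_pos t_ge_1 by (smt (verit) mult_left_mono mult_right_mono mult.assoc)
  moreover have "c * real (card W) - 1 \<le> real (card (W - closed_nbhd E v))"
    using assms(1,3,4) finite_V finite_subset by (intro card_diff_closed_nbhd_ge) auto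
  ultimately show ?thesis using t_ge_1 by (simp add: algebra_simps)
qed

lemma independent_transversal:
  assumes "finite X" "\<forall>x\<in>X. W x \<subseteq> V \<and> shrink_threshold c 0 (card X) * t \<le> real (card (W x))"
  shows "\<exists>p. (\<forall>x\<in>X. p x \<in> W x) \<and> inj_on p X \<and> (\<forall>x\<in>X. \<forall>x'\<in>X. \<not> E (p x) (p x'))"
  using assms
proof (induction X arbitrary: W rule: finite_induct)
  case (insert x X)
  let ?K = "shrink_threshold c 0 (Suc (card X))"
  have W: "W y \<subseteq> V" "?K * t \<le> real (card (W y))" if "y \<in> insert x X" for y
    using insert.prems insert.hyps that by auto
  define Bad where "Bad = (\<Union>y\<in>X. heavy_vertices V E c (W y))"
  have "real (card Bad) \<le> (\<Sum>y\<in>X. real (card (heavy_vertices V E c (W y))))"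
    unfolding Bad_def using card_UN_le[OF insert.hyps(1)] by (metis of_nat_le_iff of_nat_sum)
  also have "\<dots> \<le> (\<Sum>y\<in>X. t)"
    using card_heavy_vertices_less_threshold[OF W] by (intro sum_mono) (meson insertCI less_imp_le)
  also have "\<dots> < (real (card X) + 1) * t" using t_ge_1 by (simp add: algebra_simps)
  also have "\<dots> \<le> ?K * t" using t_ge_1 shrink_threshold_Suc_ge(3) by (intro mult_right_mono) auto
  finally have less: "card Bad < card (W x)" using W(2)[of x] by simp
  have "finite Bad" using finite_V unfolding Bad_def heavy_vertices_def by (auto intro: finite_subset)
  then have "\<not> W x \<subseteq> Bad" using less card_mono leD by blast
  then obtain v where v: "v \<in> W x" "v \<notin> Bad" by blast
  have "W y - closed_nbhd E v \<subseteq> V \<and>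
      shrink_threshold c 0 (card X) * t \<le> real (card (W y - closed_nbhd E v))" if "y \<in> X" for y
  proof -
    have "v \<in> V" "v \<notin> heavy_vertices V E c (W y)" using v W(1)[of x] that Bad_def by auto
    then show ?thesis using W[of y] that card_diff_closed_nbhd_threshold by blast
  qed
  then obtain p where p: "\<forall>y\<in>X. p y \<in> W y - closed_nbhd E v" "inj_on p X"
    "\<forall>y\<in>X. \<forall>y'\<in>X. \<not> E (p y) (p y')"
    using insert.IH[of "\<lambda>y. W y - closed_nbhd E v"] by blast
  then have "\<forall>y\<in>X. p y \<noteq> v \<and> \<not> E v (p y) \<and> \<not> E (p y) v"
    using E_sym unfolding closed_nbhd_def by blast
  then show ?case
    using p v insert.hyps(2) E_irrefl
    by (intro exI[of _ "p(x := v)"]) (auto simp: inj_on_def)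
qed simp

lemma indep_threshold_Suc_bounds:
  assumes "W \<subseteq> V" "indep_threshold c (Suc m) * t \<le> real (card W)"
  shows "real (card W) / 2 \<le> real (card (W - heavy_vertices V E c W))"
    and "\<And>v. v \<in> W - heavy_vertices V E c W \<Longrightarrow>
      c * real (card W) / 2 \<le> real (card (W - closed_nbhd E v)) \<and>
      indep_threshold c m * t \<le> real (card (W - closed_nbhd E v))"
proof -
  define w where "w = real (card W)"
  define B where "B = heavy_vertices V E c W"
  have fin_W: "finite W" using assms(1) finite_V finite_subset by auto
  have "x * t \<le> w" if "x \<le> indep_threshold c (Suc m)" for x
    using assms(2) t_ge_1 that unfolding w_def by (meson order_trans mult_right_mono zero_le_one)
  from this[of 2] this[of "2 / c"] this[of "2 * indep_threshold c m / c"]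
  have large: "2 * t \<le> w" "2 / c * t \<le> w" "2 * indep_threshold c m / c * t \<le> w"
    by simp_all
  have "real (card B) < t"
    unfolding B_def using large(1) t_ge_1 assms(1) by (intro card_heavy_vertices_less) (auto simp: w_def)
  moreover have "card (W \<inter> B) \<le> card B"
    using finite_V unfolding B_def heavy_vertices_def by (intro card_mono) auto
  ultimately show "real (card W) / 2 \<le> real (card (W - heavy_vertices V E c W))"
    using card_Int_Diff[OF fin_W, of B] large(1) unfolding w_def B_def by linarith
  fix v assume "v \<in> W - heavy_vertices V E c W"
  then have "c * w - 1 \<le> real (card (W - closed_nbhd E v))"
    unfolding w_def using fin_W assms(1) by (intro card_diff_closed_nbhd_ge[of W v V]) auto
  moreover have "2 \<le> c * w" using large(2) t_ge_1 c_pos by (simp add: field_simps)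
  moreover have "2 * indep_threshold c m * t \<le> c * w" using large(3) c_pos by (simp add: field_simps)
  ultimately show "c * real (card W) / 2 \<le> real (card (W - closed_nbhd E v)) \<and>
      indep_threshold c m * t \<le> real (card (W - closed_nbhd E v))"
    unfolding w_def by linarith
qed

lemma card_indep_embeddings_ge:
  assumes "finite Y" "W \<subseteq> V" "indep_threshold c (card Y) * t \<le> real (card W)"
  shows "indep_density c (card Y) * real (card W) ^ card Y \<le> real (card (indep_embeddings Y W E))"
  using assms
proof (induction Y arbitrary: W rule: finite_induct)
  case empty
  then show ?case by (simp add: indep_embeddings_def)
next
  case (insert y Y)
  define m where "m = card Y"
  define w where "w = real (card W)"
  define B where "B = heavy_vertices V E c W"
  let ?W' = "\<lambda>v. W - closed_nbhd E v"
  have m: "card (insert y Y) = Suc m" using insert.hyps m_def by simp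
  have W: "indep_threshold c (Suc m) * t \<le> w" using insert.prems(2) unfolding m w_def .
  have dens: "0 < indep_density c m" using c_pos by (rule indep_density_pos)
  have fin_W: "finite W" using insert.prems finite_V finite_subset by auto
  have "0 \<le> w" by (simp add: w_def)
  have "indep_density c (Suc m) * w ^ Suc m = w / 2 * (indep_density c m * (c * w / 2) ^ m)"
    by (simp add: power_mult_distrib power_divide field_simps)
  also have "\<dots> \<le> real (card (W - B)) * (indep_density c m * (c * w / 2) ^ m)"
    using indep_threshold_Suc_bounds(1)[OF insert.prems(1) W[unfolded w_def]] dens c_pos \<open>0 \<le> w\<close>
    unfolding w_def B_def by (intro mult_right_mono) auto
  also have "\<dots> = (\<Sum>v\<in>W - B. indep_density c m * (c * w / 2) ^ m)" by simp
  also have "\<dots> \<le> (\<Sum>v\<in>W - B. indep_density c m * real (card (?W' v)) ^ m)"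
    using indep_threshold_Suc_bounds(2)[OF insert.prems(1) W[unfolded w_def]] c_pos dens \<open>0 \<le> w\<close>
    unfolding w_def B_def by (intro sum_mono mult_left_mono power_mono) auto
  also have "\<dots> \<le> (\<Sum>v\<in>W - B. real (card (indep_embeddings Y (?W' v) E)))"
    using indep_threshold_Suc_bounds(2)[OF insert.prems(1) W[unfolded w_def]] insert.prems(1)
    unfolding m_def B_def by (intro sum_mono insert.IH) auto
  also have "\<dots> \<le> real (card (indep_embeddings (insert y Y) W E))"
    using sum_card_indep_embeddings_le[OF insert.hyps(2,1) fin_W, of "W - B"] E_sym E_irrefl
    by (simp flip: of_nat_sum)
  finally show ?case unfolding m w_def .
qed

lemma card_nearly_dominating_le:
  assumes "finite Z" "W \<subseteq> V" "U \<subseteq> V" "shrink_threshold c K0 (card Z) * t \<le> real (card W)"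
  shows "real (card (nearly_dominating Z U W E (K0 * t))) * real (card U)
           \<le> real (card Z) * t * real (card U) ^ card Z"
  using assms(1,2,4)
proof (induction Z arbitrary: W rule: finite_induct)
  case empty
  then show ?case by (simp add: nearly_dominating_def)
next
  case (insert y Z)
  define u where "u = real (card U)"
  define B where "B = heavy_vertices V E c W"
  have fin_U: "finite U" using assms(3) finite_V finite_subset by blast
  have W: "shrink_threshold c K0 (Suc (card Z)) * t \<le> real (card W)" using insert.prems(2) insert.hyps by simp
  have "finite B" using finite_V by (simp add: B_def heavy_vertices_def)
  then have "card (U \<inter> B) \<le> card B" by (intro card_mono) auto
  then have "real (card (U \<inter> B)) \<le> t"
    using card_heavy_vertices_less_threshold[OF insert.prems(1) W] unfolding B_def by linarith
  have IH: "real (card (nearly_dominating Z U (W - closed_nbhd E v) E (K0 * t))) * u \<le> real (card Z) * t * u ^ card Z"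
    if "v \<in> U - B" for v
    using that insert.prems(1) W assms(3) B_def unfolding u_def
    by (intro insert.IH card_diff_closed_nbhd_threshold) auto
  have "real (card (nearly_dominating (insert y Z) U W E (K0 * t))) * u
      \<le> (real (card (U \<inter> B)) * u ^ card Z
         + (\<Sum>v\<in>U - B. real (card (nearly_dominating Z U (W - closed_nbhd E v) E (K0 * t))))) * u"
    using card_nearly_dominating_insert_le[OF insert.hyps(2,1) fin_U, of W E "K0 * t" B]
    unfolding u_def by (intro mult_right_mono) (simp_all flip: of_nat_sum of_nat_power of_nat_mult of_nat_add)
  also have "\<dots> = real (card (U \<inter> B)) * u ^ Suc (card Z)
      + (\<Sum>v\<in>U - B. real (card (nearly_dominating Z U (W - closed_nbhd E v) E (K0 * t))) * u)"
    by (simp add: algebra_simps sum_distrib_left)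
  also have "\<dots> \<le> t * u ^ Suc (card Z) + (\<Sum>v\<in>U - B. real (card Z) * t * u ^ card Z)"
    using IH \<open>real (card (U \<inter> B)) \<le> t\<close> by (intro add_mono sum_mono mult_right_mono) (auto simp: u_def)
  also have "\<dots> \<le> t * u ^ Suc (card Z) + u * (real (card Z) * t * u ^ card Z)"
    using card_mono[OF fin_U, of "U - B"] t_ge_1 by (simp add: u_def mult_right_mono)
  finally show ?case using insert.hyps by (simp add: u_def algebra_simps)
qed

lemma card_maps_with_few_candidates_mult_le:
  assumes "finite Y" "S \<subseteq> Y" "VG \<subseteq> V" "U \<subseteq> V" "shrink_threshold c M (card Y) \<le> K"
  shows "real (card {f \<in> Y \<rightarrow>\<^sub>E U. real (card (extension_candidates VG EG E f Y S)) < M * t}) * real (card U)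
    \<le> real (card {h \<in> S \<rightarrow>\<^sub>E U. real (card (common_nbhd VG EG (h ` S))) < K * t}) * real (card U) ^ Suc (card (Y - S))
      + real (card (Y - S)) * t * real (card U) ^ card Y"
proof -
  define Z where "Z = Y - S"
  define u where "u = real (card U)"
  define poor where "poor h \<longleftrightarrow> real (card (common_nbhd VG EG (h ` S))) < K * t" for h
  have fin: "finite U" "finite S" using assms(1,2,4) finite_V finite_subset by auto
  have card_Y: "card S + card Z = card Y"
    using assms(1,2) fin(2) unfolding Z_def by (metis card_Diff_subset card_mono le_add_diff_inverse)
  have "real (card {f \<in> Y \<rightarrow>\<^sub>E U. real (card (extension_candidates VG EG E f Y S)) < M * t}) * u
      \<le> (\<Sum>h\<in>S \<rightarrow>\<^sub>E U. real (if poor h then card U ^ card Z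
          else card (nearly_dominating Z U (common_nbhd VG EG (h ` S)) E (M * t)))) * u"
    using card_maps_with_few_candidates_le_sum[OF assms(1,2) fin(1), of VG EG E "M * t" "K * t"]
    unfolding u_def Z_def poor_def by (intro mult_right_mono) (simp_all flip: of_nat_sum)
  also have "\<dots> \<le> (\<Sum>h\<in>S \<rightarrow>\<^sub>E U. (if poor h then u ^ Suc (card Z) else 0) + real (card Z) * t * u ^ card Z)"
    unfolding sum_distrib_right
  proof (rule sum_mono)
    fix h assume "h \<in> S \<rightarrow>\<^sub>E U"
    show "real (if poor h then card U ^ card Z else card (nearly_dominating Z U (common_nbhd VG EG (h ` S)) E (M * t))) * u
        \<le> (if poor h then u ^ Suc (card Z) else 0) + real (card Z) * t * u ^ card Z"
    proof (cases "poor h")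
      case True
      then show ?thesis using t_ge_1 by (simp add: u_def mult.commute)
    next
      case False
      have "shrink_threshold c M (card Z) * t \<le> K * t"
        using order_trans[OF shrink_threshold_mono[of "card Z" "card Y" c M] assms(5)] card_Y t_ge_1
        by (intro mult_right_mono) auto
      then have "shrink_threshold c M (card Z) * t \<le> real (card (common_nbhd VG EG (h ` S)))"
        using False unfolding poor_def by linarith
      then show ?thesis
        using card_nearly_dominating_le[of Z "common_nbhd VG EG (h ` S)" U M] False assms(1,3,4)
        unfolding u_def Z_def by (auto simp: common_nbhd_def)
    qed
  qed
  also have "\<dots> = real (card {h \<in> S \<rightarrow>\<^sub>E U. poor h}) * u ^ Suc (card Z) + real (card Z) * t * u ^ card Y"
    using fin card_Y
    by (simp add: sum.distrib sum.inter_filter[symmetric] finite_PiE card_funcsetE u_def power_add[symmetric]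
        algebra_simps)
  finally show ?thesis unfolding Z_def u_def poor_def .
qed

lemma card_maps_with_few_candidates_le:
  assumes "finite Y" "S \<subseteq> Y" "VG \<subseteq> V" "U \<subseteq> V" "U \<noteq> {}" "shrink_threshold c M (card Y) \<le> K"
    and "real (card Y) * t \<le> \<epsilon> * real (card U)"
    and "real (card {h \<in> S \<rightarrow>\<^sub>E U. real (card (common_nbhd VG EG (h ` S))) < K * t}) < \<epsilon> * real (card U) ^ card S"
  shows "real (card {f \<in> Y \<rightarrow>\<^sub>E U. real (card (extension_candidates VG EG E f Y S)) < M * t})
    \<le> 2 * \<epsilon> * real (card U) ^ card Y"
proof -
  define u where "u = real (card U)"
  define b where "b = card Y"
  have u: "0 < u" using assms(4,5) finite_V finite_subset by (auto simp: u_def card_gt_0_iff)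
  have card_Y: "card S + card (Y - S) = b"
    using assms(1,2) unfolding b_def by (metis card_Diff_subset card_mono finite_subset le_add_diff_inverse)
  have "real (card {f \<in> Y \<rightarrow>\<^sub>E U. real (card (extension_candidates VG EG E f Y S)) < M * t}) * u
      \<le> real (card {h \<in> S \<rightarrow>\<^sub>E U. real (card (common_nbhd VG EG (h ` S))) < K * t}) * u ^ Suc (card (Y - S))
        + real (card (Y - S)) * t * u ^ b"
    using card_maps_with_few_candidates_mult_le[OF assms(1-4,6), of EG] unfolding u_def b_def .
  also have "\<dots> \<le> \<epsilon> * u ^ card S * u ^ Suc (card (Y - S)) + real (card (Y - S)) * t * u ^ b"
    using assms(8) u by (intro add_right_mono mult_right_mono) (auto simp: u_def)
  also have "\<dots> \<le> \<epsilon> * u ^ Suc b + real b * t * u ^ b"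
  proof -
    have "\<epsilon> * u ^ card S * u ^ Suc (card (Y - S)) = \<epsilon> * u ^ Suc b"
      using card_Y by (metis mult.assoc power_add add_Suc_right)
    moreover have "real (card (Y - S)) * t * u ^ b \<le> real b * t * u ^ b"
      using card_Y u t_ge_1 by (intro mult_right_mono) auto
    ultimately show ?thesis by linarith
  qed
  also have "\<dots> \<le> \<epsilon> * u ^ Suc b + \<epsilon> * u * u ^ b"
    using assms(7) u by (simp add: b_def u_def mult_right_mono)
  finally show ?thesis using u by (simp add: u_def b_def algebra_simps)
qed

lemma exists_indep_embedding_with_many_candidates:
  fixes S :: "'b \<Rightarrow> 'b set"
  assumes "finite X" "finite Y" "\<forall>x\<in>X. S x \<subseteq> Y" "VG \<subseteq> V" "U \<subseteq> V" "U \<noteq> {}"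
    and "2 * real (card X) * \<epsilon> < indep_density c (card Y)"
    and "indep_threshold c (card Y) * t \<le> real (card U)" "real (card Y) * t \<le> \<epsilon> * real (card U)"
    and "shrink_threshold c M (card Y) \<le> K"
    and poor: "\<forall>x\<in>X. real (card {h \<in> S x \<rightarrow>\<^sub>E U. real (card (common_nbhd VG EG (h ` S x))) < K * t})
                  < \<epsilon> * real (card U) ^ card (S x)"
  shows "\<exists>f\<in>indep_embeddings Y U E. \<forall>x\<in>X. M * t \<le> real (card (extension_candidates VG EG E f Y (S x)))"
proof -
  define u where "u = real (card U)"
  define bad where "bad x = {f \<in> Y \<rightarrow>\<^sub>E U. real (card (extension_candidates VG EG E f Y (S x))) < M * t}" for x
  have fin_U: "finite U" using assms(5) finite_V finite_subset by blast
  then have u: "0 < u" using assms(6) by (simp add: u_def card_gt_0_iff)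
  have fin_bad: "finite (bad x)" for x
    using fin_U assms(2) unfolding bad_def by (simp add: finite_PiE)
  have "real (card (\<Union>x\<in>X. bad x)) \<le> (\<Sum>x\<in>X. real (card (bad x)))"
    using card_UN_le[OF assms(1), of bad] by (simp flip: of_nat_sum)
  also have "\<dots> \<le> (\<Sum>x\<in>X. 2 * \<epsilon> * u ^ card Y)"
    using card_maps_with_few_candidates_le[OF assms(2) _ assms(4-6,10,9)] assms(3) poor
    unfolding bad_def u_def by (intro sum_mono) auto
  also have "\<dots> = 2 * real (card X) * \<epsilon> * u ^ card Y" by simp
  also have "\<dots> < indep_density c (card Y) * u ^ card Y" using assms(7) u by simp
  also have "\<dots> \<le> real (card (indep_embeddings Y U E))"
    using card_indep_embeddings_ge[OF assms(2,5,8)] by (simp add: u_def)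
  finally have "\<not> indep_embeddings Y U E \<subseteq> (\<Union>x\<in>X. bad x)"
    using card_mono[of "\<Union>x\<in>X. bad x"] fin_bad assms(1) by (meson finite_UN_I not_le of_nat_le_iff)
  then obtain f where "f \<in> indep_embeddings Y U E" "\<forall>x\<in>X. f \<notin> bad x" by blast
  then show ?thesis by (auto simp: bad_def indep_embeddings_def not_less)
qed

lemma bipartite_embedding_in_rich_set:
  fixes S :: "'b \<Rightarrow> 'b set"
  assumes "finite X" "finite Y" "\<forall>x\<in>X. S x \<subseteq> Y" "VG \<subseteq> V" "U \<subseteq> VG"
    and "0 < \<epsilon>" "2 * real (card X) * \<epsilon> < indep_density c (card Y)"
    and "indep_threshold c (card Y) \<le> L" "real (card Y) \<le> \<epsilon> * L" "1 \<le> L" "L * t < real (card U)"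
    and "\<forall>x\<in>X. real (card {h \<in> S x \<rightarrow>\<^sub>E U. real (card (common_nbhd VG EG (h ` S x)))
                  < shrink_threshold c (shrink_threshold c 0 (card X)) (card Y) * t})
               < \<epsilon> * real (card U) ^ card (S x)"
  shows "\<exists>f p. f \<in> indep_embeddings Y VG E \<and> (\<forall>x\<in>X. p x \<in> extension_candidates VG EG E f Y (S x))
    \<and> inj_on p X \<and> (\<forall>x\<in>X. \<forall>x'\<in>X. \<not> E (p x) (p x'))"
proof -
  have "L * t \<le> real (card U)" using assms(11) by simp
  moreover have "indep_threshold c (card Y) * t \<le> L * t" "real (card Y) * t \<le> \<epsilon> * (L * t)"
    using assms(8,9) t_ge_1 by (auto simp: mult.assoc[symmetric] intro: mult_right_mono)
  ultimately have "indep_threshold c (card Y) * t \<le> real (card U)" "real (card Y) * t \<le> \<epsilon> * real (card U)"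
    using assms(6) by (auto intro: order_trans mult_left_mono)
  moreover have "U \<noteq> {}"
  proof -
    have "0 < L * t" using assms(10) t_ge_1 by simp
    then show ?thesis using assms(11) by auto
  qed
  ultimately obtain f where f: "f \<in> indep_embeddings Y U E"
    and cand: "\<forall>x\<in>X. shrink_threshold c 0 (card X) * t \<le> real (card (extension_candidates VG EG E f Y (S x)))"
    using exists_indep_embedding_with_many_candidates[OF assms(1-4) _ _ assms(7) _ _ order_refl assms(12)]
      assms(4,5) by blast
  have "\<forall>x\<in>X. extension_candidates VG EG E f Y (S x) \<subseteq> V"
    using assms(4) by (auto simp: extension_candidates_def common_nbhd_def)
  then obtain p where "\<forall>x\<in>X. p x \<in> extension_candidates VG EG E f Y (S x)" "inj_on p X"
    "\<forall>x\<in>X. \<forall>x'\<in>X. \<not> E (p x) (p x')"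
    using independent_transversal[OF assms(1), of "\<lambda>x. extension_candidates VG EG E f Y (S x)"] cand by blast
  moreover have "f \<in> indep_embeddings Y VG E" using f assms(5) by (auto simp: indep_embeddings_def PiE_iff)
  ultimately show ?thesis by blast
qed

lemma exists_bipartite_embedding:
  fixes S :: "'b \<Rightarrow> 'b set" and VG :: "'a set"
  assumes "finite X" "finite Y" "\<forall>x\<in>X. S x \<subseteq> Y \<and> card (S x) \<le> d" "0 < d"
    and "subgraph VG EG V E" "VG \<noteq> {}"
    and dense: "copy_constant c (card X) (card Y) d ^ d * t
      \<le> (\<Sum>T\<in>{..<d} \<rightarrow>\<^sub>E VG. real (card (common_nbhd VG EG (T ` {..<d})))) / real (card VG) ^ d"
  shows "\<exists>f p. f \<in> indep_embeddings Y VG E \<and> (\<forall>x\<in>X. p x \<in> extension_candidates VG EG E f Y (S x))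
    \<and> inj_on p X \<and> (\<forall>x\<in>X. \<forall>x'\<in>X. \<not> E (p x) (p x'))"
proof -
  have VG: "VG \<subseteq> V" "\<And>u v. EG u v \<Longrightarrow> EG v u"
    using assms(5) unfolding subgraph_def simple_graph_def by auto
  define a where "a = card X"
  define b where "b = card Y"
  define \<epsilon> where "\<epsilon> = indep_density c b / (2 * (real a + 1))"
  define K where "K = shrink_threshold c (shrink_threshold c 0 a) b"
  define L where "L = max (indep_threshold c b) (max 1 (real b / \<epsilon>))"
  define C where "C = copy_constant c a b d"
  have C: "C = real a / \<epsilon> * K ^ d + L ^ d + 1"
    by (simp add: C_def copy_constant_def Let_def \<epsilon>_def K_def L_def)
  have \<epsilon>: "0 < \<epsilon>" using indep_density_pos[OF c_pos] by (simp add: \<epsilon>_def)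
  have K: "0 \<le> K"
    unfolding K_def by (rule order_trans[OF shrink_threshold_ge shrink_threshold_ge])
  have L: "1 \<le> L" "indep_threshold c b \<le> L" "real b / \<epsilon> \<le> L" by (simp_all add: L_def)
  then have "real b \<le> \<epsilon> * L" using \<epsilon> by (simp add: pos_divide_le_eq mult.commute)
  have "real a / \<epsilon> * (K * t) ^ d + (L * t) ^ d = (real a / \<epsilon> * K ^ d + L ^ d) * t ^ d"
    by (simp add: power_mult_distrib algebra_simps)
  also have "\<dots> < (C ^ d * t) ^ d"
    unfolding C using mult_power_less_power_power[of "real a / \<epsilon> * K ^ d + L ^ d" t d] \<epsilon> K L t_ge_1 assms(4)
    by simp
  also have "\<dots> \<le> ((\<Sum>T\<in>{..<d} \<rightarrow>\<^sub>E VG. real (card (common_nbhd VG EG (T ` {..<d})))) / real (card VG) ^ d) ^ d"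
    using dense copy_constant_ge_1[OF c_pos, of a b d] t_ge_1 unfolding C_def a_def b_def
    by (intro power_mono) simp_all
  moreover have "finite VG" using VG(1) finite_V finite_subset by blast
  moreover have "finite (S x) \<and> card (S x) \<le> card {..<d}" if "x \<in> X" for x
    using assms(2,3) that by (auto intro: finite_subset)
  ultimately obtain T where
    "L * t < real (card (common_nbhd VG EG (T ` {..<d})))"
    "\<forall>x\<in>X. real (card {h \<in> S x \<rightarrow>\<^sub>E common_nbhd VG EG (T ` {..<d}).
                 real (card (common_nbhd VG EG (h ` S x))) < K * t})
               < \<epsilon> * real (card (common_nbhd VG EG (T ` {..<d}))) ^ card (S x)"
    using dependent_random_choice[of VG "{..<d}" EG X S \<epsilon> "K * t" "L * t"] assms(1,6) VG(2) \<epsilon> K L(1) t_ge_1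
    unfolding a_def by auto
  moreover have "2 * real a * \<epsilon> < indep_density c b"
    using indep_density_pos[OF c_pos] by (simp add: \<epsilon>_def field_simps)
  ultimately show ?thesis
    using bipartite_embedding_in_rich_set[OF assms(1,2) _ VG(1), of S "common_nbhd VG EG (T ` {..<d})" \<epsilon> L]
      assms(3) \<epsilon> L \<open>real b \<le> \<epsilon> * L\<close> unfolding a_def b_def K_def by (auto simp: common_nbhd_def)
qed

end

lemma sparse_graph_of_edge:
  assumes "simple_graph V E" "sparse c t V E" "0 < c" "u \<in> V" "v \<in> V" "E u v"
  shows "sparse_graph V E c t"
  using assms sparse_edge_imp_gt_1[OF assms(2-6)] by unfold_locales auto

section \<open>Induced copies\<close>

lemma inj_on_if_union:
  assumes "inj_on p X" "inj_on f Y" "\<And>x y. x \<in> X \<Longrightarrow> y \<in> Y \<Longrightarrow> p x \<noteq> f y"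
  shows "inj_on (\<lambda>v. if v \<in> X then p v else f v) (X \<union> Y)"
  using assms unfolding inj_on_def by (metis UnE)

lemma extension_candidates_adj:
  assumes "q \<in> extension_candidates VG EG E f Y S" "y \<in> Y"
    and "\<And>u v. EG u v \<Longrightarrow> E u v" "\<And>u v. E u v \<Longrightarrow> E v u" "\<And>u. \<not> EG u u"
  shows "y \<in> S \<Longrightarrow> EG (f y) q" and "E q (f y) \<longleftrightarrow> y \<in> S" and "q \<noteq> f y"
proof -
  have S: "y \<in> S \<Longrightarrow> EG (f y) q" and not_S: "y \<notin> S \<Longrightarrow> q \<noteq> f y \<and> \<not> E (f y) q"
    using assms(1,2) by (auto simp: extension_candidates_def common_nbhd_def closed_nbhd_def)
  show "y \<in> S \<Longrightarrow> EG (f y) q" by (rule S)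
  show "E q (f y) \<longleftrightarrow> y \<in> S" using S not_S assms(3,4) by blast
  show "q \<noteq> f y" using S not_S assms(5) by blast
qed

lemma induced_copy_of_bipartite_embedding:
  assumes "simple_graph VH EH" "X \<union> Y = VH" "X \<inter> Y = {}"
    and cross: "\<forall>u v. EH u v \<longrightarrow> (u \<in> X \<and> v \<in> Y) \<or> (u \<in> Y \<and> v \<in> X)"
    and "simple_graph VG EG" "\<And>u v. EG u v \<Longrightarrow> E u v" "\<And>u v. E u v \<Longrightarrow> E v u"
    and f: "f \<in> indep_embeddings Y VG E"
    and p: "\<forall>x\<in>X. p x \<in> extension_candidates VG EG E f Y {y \<in> VH. EH x y}" "inj_on p X"
      "\<forall>x\<in>X. \<forall>x'\<in>X. \<not> E (p x) (p x')"
  shows "induced_copy VH EH VG EG E (\<lambda>v. if v \<in> X then p v else f v)"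
proof -
  define \<phi> where "\<phi> v = (if v \<in> X then p v else f v)" for v
  have \<phi>: "x \<in> X \<Longrightarrow> \<phi> x = p x" "y \<in> Y \<Longrightarrow> \<phi> y = f y" for x y
    using assms(3) by (auto simp: \<phi>_def)
  have EH_sym: "EH u v \<Longrightarrow> EH v u" for u v using assms(1) unfolding simple_graph_def by blast
  have EG: "EG u v \<Longrightarrow> EG v u" "\<not> EG u u" for u v using assms(5) unfolding simple_graph_def by blast+
  have f: "\<forall>y\<in>Y. f y \<in> VG" "inj_on f Y" "\<forall>y\<in>Y. \<forall>y'\<in>Y. \<not> E (f y) (f y')"
    using f unfolding indep_embeddings_def by (auto simp: PiE_iff)
  have p_VG: "\<forall>x\<in>X. p x \<in> VG" using p(1) by (auto simp: extension_candidates_def common_nbhd_def)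
  have adj: "EH x y \<Longrightarrow> EG (f y) (p x)" "E (p x) (f y) \<longleftrightarrow> EH x y" "p x \<noteq> f y"
    if "x \<in> X" "y \<in> Y" for x y
    using extension_candidates_adj[OF p(1)[rule_format, OF that(1)] that(2) assms(6,7) EG(2)] that assms(2)
    by auto
  have "inj_on \<phi> VH"
    using inj_on_if_union[OF p(2) f(2)] adj(3) unfolding \<phi>_def assms(2)[symmetric] by blast
  moreover have "\<phi> ` VH \<subseteq> VG" using assms(2) \<phi> p_VG f(1) by fastforce
  moreover have "EG (\<phi> v) (\<phi> w)" if "EH v w" for v w
    using cross[rule_format, OF that] that adj(1)[of v w] adj(1)[of w v] EG(1) EH_sym by (auto simp: \<phi>)
  moreover have "EH v w" if "v \<in> VH" "w \<in> VH" "E (\<phi> v) (\<phi> w)" for v w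
    using assms(2,7) that p(3) f(3) adj(2)[of v w] adj(2)[of w v] EH_sym
    by (cases "v \<in> X"; cases "w \<in> X") (auto simp: \<phi>)
  ultimately show ?thesis unfolding induced_copy_def \<phi>_def by blast
qed

theorem corollary1p3:
  fixes d :: nat and VH :: "'b set" and EH :: "'b \<Rightarrow> 'b \<Rightarrow> bool" and c :: real
  assumes "d > 0"
    and "simple_graph VH EH"
    and "bipartite_one_side_deg VH EH d"
    and "c > 0"
  shows "\<exists>C>0. \<forall>(t::real) (V::nat set) E VG EG.
           t > 0 \<longrightarrow> simple_graph V E \<longrightarrow> sparse c t V E \<longrightarrow> subgraph VG EG V E \<longrightarrow>
           real (num_edges VG EG) \<ge> C * t powr (1 / real d) * real (card V) powr (2 - 1 / real d) \<longrightarrow>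
           card V > 0 \<longrightarrow>
           (\<exists>phi. induced_copy VH EH VG EG E phi)"
proof -
  obtain X Y where XY: "X \<union> Y = VH" "X \<inter> Y = {}"
    and cross: "\<forall>u v. EH u v \<longrightarrow> (u \<in> X \<and> v \<in> Y) \<or> (u \<in> Y \<and> v \<in> X)"
    and deg: "\<forall>x\<in>X. degree VH EH x \<le> d"
    using assms(3) unfolding bipartite_one_side_deg_def by blast
  have fin: "finite X" "finite Y" using assms(2) XY(1) unfolding simple_graph_def by auto
  have S: "\<forall>x\<in>X. {y \<in> VH. EH x y} \<subseteq> Y \<and> card {y \<in> VH. EH x y} \<le> d"
    using cross XY(2) deg unfolding degree_def by blast
  define C where "C = copy_constant c (card X) (card Y) d"
  have "C \<ge> 1" unfolding C_def using assms(4) by (rule copy_constant_ge_1)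
  show ?thesis
  proof (intro exI[of _ C] conjI allI impI)
    fix t :: real and V :: "nat set" and E VG EG
    assume "t > 0" "simple_graph V E" "sparse c t V E" and sub: "subgraph VG EG V E"
      and dense: "real (num_edges VG EG) \<ge> C * t powr (1 / real d) * real (card V) powr (2 - 1 / real d)"
      and "card V > 0"
    have G: "simple_graph VG EG" "VG \<subseteq> V" "\<And>u v. EG u v \<Longrightarrow> E u v"
      using sub unfolding subgraph_def by auto
    have "0 < num_edges VG EG"
      using dense \<open>C \<ge> 1\<close> \<open>t > 0\<close> \<open>card V > 0\<close> by (smt (verit) of_nat_0_less_iff powr_gt_zero mult_pos_pos)
    then obtain u v where "u \<in> VG" "v \<in> VG" "EG u v" by (rule num_edges_pos_imp_edge)
    interpret sparse_graph V E c t
      by (rule sparse_graph_of_edge[OF \<open>simple_graph V E\<close> \<open>sparse c t V E\<close> assms(4) _ _ G(3)[OF \<open>EG u v\<close>]])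
        (use G(2) \<open>u \<in> VG\<close> \<open>v \<in> VG\<close> in auto)
    have "C ^ d * t \<le> (\<Sum>T\<in>{..<d} \<rightarrow>\<^sub>E VG. real (card (common_nbhd VG EG (T ` {..<d})))) / real (card VG) ^ d"
      using \<open>u \<in> VG\<close> \<open>C \<ge> 1\<close> card_mono[OF finite_V G(2)] \<open>t > 0\<close> assms(1) dense
      by (intro mean_card_common_nbhd_ge[OF G(1), where n = "real (card V)"]) auto
    then obtain f p where "f \<in> indep_embeddings Y VG E"
      "\<forall>x\<in>X. p x \<in> extension_candidates VG EG E f Y {y \<in> VH. EH x y}" "inj_on p X"
      "\<forall>x\<in>X. \<forall>x'\<in>X. \<not> E (p x) (p x')"
      using exists_bipartite_embedding[OF fin S assms(1) sub] \<open>u \<in> VG\<close> unfolding C_def by blast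
    then show "\<exists>phi. induced_copy VH EH VG EG E phi"
      using induced_copy_of_bipartite_embedding[where E = E, OF assms(2) XY cross G(1,3) E_sym] by blast
  qed (use \<open>C \<ge> 1\<close> in simp)
qed

end
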